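(* Let $k\ge 1$ be an integer with $4\nmid k$ such that $\mathcal{D}:=(k^2+4)/\gcd(2,k)^2$ is squarefree, and let $p$ be a prime. Then the polynomial $\mathcal{F}_p(x):=x^{2p}-kx^p-1$ is irreducible over $\mathbb{Q}$. *)

theory Defs
  imports "HOL-Computational_Algebra.Computational_Algebra"
begin

definition F_poly :: "int \<Rightarrow> nat \<Rightarrow> rat poly" where
  "F_poly k p = monom 1 (2 * p) - smult (of_int k) (monom 1 p) - 1"

end

(*
  Let eps = (k + sqrt (k^2 + 4)) / 2 and K = Q(sqrt (k^2 + 4)). Over K the polynomial factors as
  F_p = (x^p - eps) (x^p - eps') with eps' = k - eps = -1/eps. A rational factor G of F_p of
  degree at most p must share a nonconstant monic factor q with one of the two binomials, and
  the gcd computing q stays in K[x]. If 0 < deg q < p, Capelli's argument applies: the constant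
  term of q has modulus b^(deg q), where b is the positive real p-th root of |eps| or |eps'|,
  and since deg q is coprime to p this puts b into K; if deg q = p, then eps or eps' would be
  rational. It therefore remains to show that eps has no p-th root a in K. The conjugate a' of
  such an a satisfies a a' = -1, so t = a - 1/a = a + a' is an integer (a Lucas sequence
  argument) with t^2 + 4 = D B^2, D = (k^2 + 4) / gcd(2,k)^2, for an integer B (by
  squarefreeness of D). Parity arguments on this negative Pell equation give t >= k, that is
  a - 1/a >= eps - 1/eps, hence a >= eps, which contradicts a^p = eps > 1.
*)
theory Submission
  imports Defs "HOL-Computational_Algebra.Field_as_Ring"
begin

section \<open>Subfields and polynomials over them\<close>

definition is_subfield :: "'a::field set \<Rightarrow> bool" where
  "is_subfield K \<longleftrightarrow> 1 \<in> K \<and> (\<forall>x\<in>K. \<forall>y\<in>K. x - y \<in> K \<and> x * y \<in> K) \<and> (\<forall>x\<in>K. inverse x \<in> K)"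

lemma is_subfieldD:
  assumes "is_subfield K"
  shows subfield_1: "1 \<in> K" and subfield_0: "0 \<in> K"
    and subfield_diff: "x \<in> K \<Longrightarrow> y \<in> K \<Longrightarrow> x - y \<in> K"
    and subfield_minus: "x \<in> K \<Longrightarrow> - x \<in> K"
    and subfield_add: "x \<in> K \<Longrightarrow> y \<in> K \<Longrightarrow> x + y \<in> K"
    and subfield_mult: "x \<in> K \<Longrightarrow> y \<in> K \<Longrightarrow> x * y \<in> K"
    and subfield_inverse: "x \<in> K \<Longrightarrow> inverse x \<in> K"
    and subfield_divide: "x \<in> K \<Longrightarrow> y \<in> K \<Longrightarrow> x / y \<in> K"
proof -
  note K = assms[unfolded is_subfield_def]
  show "1 \<in> K" using K by blast
  then show zero: "0 \<in> K" using K by (metis diff_self)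
  show "x \<in> K \<Longrightarrow> y \<in> K \<Longrightarrow> x - y \<in> K" using K by blast
  have minus: "- z \<in> K" if "z \<in> K" for z using K zero that by (metis diff_0)
  then show "x \<in> K \<Longrightarrow> - x \<in> K" .
  show "x + y \<in> K" if "x \<in> K" "y \<in> K"
    using K minus[OF that(2)] that(1) by (metis diff_minus_eq_add)
  show "x \<in> K \<Longrightarrow> y \<in> K \<Longrightarrow> x * y \<in> K" using K by blast
  show "x \<in> K \<Longrightarrow> inverse x \<in> K" using K by blast
  show "x \<in> K \<Longrightarrow> y \<in> K \<Longrightarrow> x / y \<in> K" using K by (simp add: divide_inverse)
qed

lemma subfield_power: "is_subfield K \<Longrightarrow> x \<in> K \<Longrightarrow> x ^ n \<in> K"
  by (induction n) (simp_all add: subfield_1 subfield_mult)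

lemma subfield_sum: "is_subfield K \<Longrightarrow> (\<And>i. i \<in> A \<Longrightarrow> f i \<in> K) \<Longrightarrow> sum f A \<in> K"
  by (induction A rule: infinite_finite_induct) (simp_all add: subfield_0 subfield_add)

lemma Rats_subset_subfield:
  fixes K :: "'a::field_char_0 set"
  assumes "is_subfield K"
  shows "\<rat> \<subseteq> K"
proof
  have nat: "of_nat n \<in> K" for n
    by (induction n) (simp_all add: assms subfield_0 subfield_1 subfield_add)
  have int: "of_int z \<in> K" for z
    by (cases z rule: int_diff_cases) (simp add: nat assms subfield_diff)
  fix x :: 'a assume "x \<in> \<rat>"
  then obtain a b where "x = of_int a / of_int b" by (metis Rats_cases' of_rat_rat)
  then show "x \<in> K" by (simp add: int assms subfield_divide)
qed

definition poly_over :: "'a::zero set \<Rightarrow> 'a poly \<Rightarrow> bool" where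
  "poly_over K f \<longleftrightarrow> (\<forall>i. coeff f i \<in> K)"

lemma poly_over_mono: "K \<subseteq> L \<Longrightarrow> poly_over K f \<Longrightarrow> poly_over L f"
  by (auto simp: poly_over_def)

context
  fixes K :: "'a::field set"
  assumes K: "is_subfield K"
begin

lemma poly_over_0: "poly_over K 0"
  by (simp add: poly_over_def K subfield_0)

lemma poly_over_const: "c \<in> K \<Longrightarrow> poly_over K [:c:]"
  by (simp add: poly_over_def coeff_pCons K subfield_0 split: nat.split)

lemma poly_over_monom: "c \<in> K \<Longrightarrow> poly_over K (monom c n)"
  by (simp add: poly_over_def coeff_monom K subfield_0)

lemma poly_over_add: "poly_over K f \<Longrightarrow> poly_over K g \<Longrightarrow> poly_over K (f + g)"
  by (simp add: poly_over_def K subfield_add)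

lemma poly_over_diff: "poly_over K f \<Longrightarrow> poly_over K g \<Longrightarrow> poly_over K (f - g)"
  by (simp add: poly_over_def K subfield_diff)

lemma poly_over_mult: "poly_over K f \<Longrightarrow> poly_over K g \<Longrightarrow> poly_over K (f * g)"
  by (simp add: poly_over_def coeff_mult K subfield_sum subfield_mult)

lemma poly_over_division:
  assumes "poly_over K f" "poly_over K g" "g \<noteq> 0"
  shows "\<exists>q r. poly_over K q \<and> poly_over K r \<and> f = q * g + r \<and> (r = 0 \<or> degree r < degree g)"
  using assms(1)
proof (induction "degree f" arbitrary: f rule: less_induct)
  case less
  show ?case
  proof (cases "f = 0 \<or> degree f < degree g")
    case True
    then show ?thesis using less.prems by (metis add_0 mult_zero_left poly_over_0)
  next
    case False
    define m where "m = monom (lead_coeff f / lead_coeff g) (degree f - degree g)"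
    define f' where "f' = f - m * g"
    have "lead_coeff f \<in> K" "lead_coeff g \<in> K"
      using less.prems assms(2) by (simp_all add: poly_over_def)
    then have m: "poly_over K m"
      unfolding m_def by (intro poly_over_monom subfield_divide K)
    have f': "poly_over K f'"
      unfolding f'_def using less.prems assms(2) m by (intro poly_over_diff poly_over_mult)
    have "degree (m * g) \<le> degree f"
      using False degree_mult_le[of m g] degree_monom_le[of "lead_coeff f / lead_coeff g" "degree f - degree g"]
      unfolding m_def by linarith
    then have "degree f' \<le> degree f"
      unfolding f'_def using degree_diff_le by blast
    moreover have "coeff f' (degree f) = 0"
      using False assms(3) by (simp add: f'_def m_def coeff_monom_mult)
    ultimately have "f' = 0 \<or> degree f' < degree f"
      using degree_less_if_less_eqI by blast
    then obtain q r where "poly_over K q" "poly_over K r" "f' = q * g + r" "r = 0 \<or> degree r < degree g"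
      using less.hyps[OF _ f'] f' by (metis add_0 mult_zero_left poly_over_0)
    moreover have "f = (q + m) * g + r"
      using \<open>f' = q * g + r\<close> by (simp add: f'_def algebra_simps)
    ultimately show ?thesis
      using m poly_over_add by blast
  qed
qed

lemma poly_over_div_mod:
  assumes "poly_over K f" "poly_over K g"
  shows "poly_over K (f div g)" "poly_over K (f mod g)"
proof -
  have "poly_over K (f div g) \<and> poly_over K (f mod g)"
  proof (cases "g = 0")
    case False
    then obtain q r where qr: "poly_over K q" "poly_over K r" "f = q * g + r" "r = 0 \<or> degree r < degree g"
      using poly_over_division assms by blast
    have "(f div g, f mod g) = (q, r)"
    proof (rule euclidean_relation_polyI)
      assume "g dvd f"
      then have "g dvd r"
        using qr(3) by (simp add: dvd_add_right_iff)
      then show "r = 0 \<and> f = q * g"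
        using qr(3,4) by (auto dest: dvd_imp_degree_le)
    qed (use qr False in auto)
    then show ?thesis using qr by simp
  qed (use assms in \<open>simp add: poly_over_0\<close>)
  then show "poly_over K (f div g)" "poly_over K (f mod g)" by simp_all
qed

end

context
  fixes K :: "'a::field_gcd set"
  assumes K: "is_subfield K"
begin

lemma poly_over_normalize:
  assumes "poly_over K f"
  shows "poly_over K (normalize f)"
proof (cases "f = 0")
  case False
  then have "unit_factor (lead_coeff f) = lead_coeff f"
    by (intro is_unit_unit_factor) (simp add: dvd_field_iff)
  then show ?thesis
    using assms K by (simp add: poly_over_def normalize_poly_eq_map_poly coeff_map_poly subfield_divide)
qed (simp add: poly_over_0[OF K])

lemma poly_over_gcd: "poly_over K f \<Longrightarrow> poly_over K g \<Longrightarrow> poly_over K (gcd f g)"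
proof (induction f g rule: eucl_induct)
  case (zero f)
  then show ?case by (simp add: poly_over_normalize)
next
  case (mod f g)
  then have "poly_over K (gcd g (f mod g))"
    by (simp add: poly_over_div_mod[OF K])
  with \<open>g \<noteq> 0\<close> show ?case
    by (simp add: gcd.commute)
qed

end

section \<open>Factors of binomials over real subfields\<close>

lemma is_subfield_of_real_image:
  assumes "is_subfield K"
  shows "is_subfield (of_real ` K :: 'a::real_field set)"
  using assms unfolding is_subfield_def
  by (auto simp flip: of_real_diff of_real_mult of_real_inverse intro!: imageI)

lemma subfield_power_coprime:
  fixes x :: "'a::field"
  assumes K: "is_subfield K" and "x ^ m \<in> K" "x ^ n \<in> K" "coprime m n" "x \<noteq> 0"
  shows "x \<in> K"
proof (cases "m = 0")
  case True
  then show ?thesis using assms by simp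
next
  case False
  then obtain i j where "m * i = n * j + 1"
    using bezout_nat[of m n] \<open>coprime m n\<close> by auto
  then have "x = (x ^ m) ^ i / (x ^ n) ^ j"
    using \<open>x \<noteq> 0\<close> by (simp flip: power_mult add: power_add)
  then show ?thesis
    using assms by (metis subfield_power subfield_divide)
qed

lemma degree_binomial:
  fixes c :: "'a::comm_ring_1"
  assumes "n > 0"
  shows "degree (monom 1 n - [:c:]) = n"
proof -
  have "monom 1 n - [:c:] = monom 1 n + [:-c:]"
    by (simp add: diff_conv_add_uminus)
  moreover have "degree (monom 1 n + [:-c:]) = n"
    using assms by (simp add: degree_add_eq_left degree_monom_eq)
  ultimately show ?thesis by metis
qed

lemma lead_coeff_binomial:
  fixes c :: "'a::comm_ring_1"
  shows "n > 0 \<Longrightarrow> lead_coeff (monom 1 n - [:c:]) = 1"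
  by (cases n) (simp_all add: degree_binomial)

lemma dvd_degree_eq_smult:
  fixes q f :: "'a::field poly"
  assumes "q dvd f" "f \<noteq> 0" "degree q = degree f"
  shows "f = smult (lead_coeff f / lead_coeff q) q"
proof -
  obtain w where w: "f = q * w" using assms(1) by (elim dvdE)
  with assms have "q \<noteq> 0" "w \<noteq> 0" by auto
  with w assms(3) have "degree w = 0" by (simp add: degree_mult_eq)
  then have "[:lead_coeff w:] = w" using degree_0_id[of w] by simp
  then have "f = q * [:lead_coeff w:]" using w by simp
  then have "f = smult (lead_coeff w) q" by simp
  then show ?thesis
    using \<open>q \<noteq> 0\<close> by simp
qed

lemma monic_dvd_degree_eq:
  fixes q f :: "'a::field poly"
  assumes "q dvd f" "lead_coeff q = 1" "lead_coeff f = 1" "degree q = degree f"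
  shows "q = f"
proof -
  have "f \<noteq> 0"
    using assms(3) by auto
  then show ?thesis
    using dvd_degree_eq_smult[OF assms(1) _ assms(4)] assms(2,3) by simp
qed

lemma norm_poly_0_of_dvd_binomial:
  fixes q :: "complex poly"
  assumes "q dvd monom 1 n - [:c:]" "lead_coeff q = 1"
  shows "cmod (poly q 0) ^ n = cmod c ^ degree q"
  using assms
proof (induction "degree q" arbitrary: q)
  case 0
  then have "q = 1" by (metis degree_0_id one_pCons)
  then show ?case by simp
next
  case (Suc d)
  then obtain z where "poly q z = 0"
    using fundamental_theorem_of_algebra constant_degree by (metis nat.distinct(1))
  then obtain q' where q: "q = [:-z, 1:] * q'"
    by (metis dvdE poly_eq_0_iff_dvd)
  have "q' \<noteq> 0" using q Suc.prems by auto
  then have "degree q = degree [:-z, 1:] + degree q'"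
    unfolding q by (intro degree_mult_eq) auto
  moreover have "lead_coeff q = lead_coeff [:-z, 1:] * lead_coeff q'"
    unfolding q by (rule lead_coeff_mult)
  ultimately have "degree q' = d" "lead_coeff q' = 1"
    using Suc.hyps(2) Suc.prems(2) by simp_all
  moreover have "q' dvd monom 1 n - [:c:]"
    using Suc.prems(1) unfolding q by (rule dvd_mult_right)
  ultimately have IH: "cmod (poly q' 0) ^ n = cmod c ^ d"
    using Suc.hyps(1) by simp
  have "poly (monom 1 n - [:c:]) z = 0"
    using Suc.prems(1) \<open>poly q z = 0\<close> by (metis dvdE mult_eq_0_iff poly_mult)
  then have "z ^ n = c"
    by (simp add: poly_monom)
  then have "cmod z ^ n = cmod c"
    by (metis norm_power)
  moreover have "poly q 0 = - z * poly q' 0"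
    unfolding q by simp
  ultimately show ?case
    using IH Suc.hyps(2)[symmetric] by (simp add: norm_mult power_mult_distrib)
qed

lemma root_in_subfield_of_binomial_factor:
  fixes K :: "real set" and q :: "complex poly"
  assumes K: "is_subfield K" and q: "poly_over (of_real ` K) q" "lead_coeff q = 1"
    and dvd: "q dvd monom 1 p - [:of_real e:]" and p: "prime p" "0 < degree q" "degree q < p"
    and e: "e \<in> K" "b > 0" "\<bar>e\<bar> = b ^ p"
  shows "b \<in> K"
proof -
  have "cmod (poly q 0) ^ p = (b ^ degree q) ^ p"
    using norm_poly_0_of_dvd_binomial[OF dvd q(2)] e by (simp flip: power_mult add: mult.commute)
  then have "cmod (poly q 0) = b ^ degree q"
    by (rule power_eq_imp_eq_base) (use prime_gt_0_nat[OF p(1)] e(2) in simp_all)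
  moreover obtain x where "x \<in> K" "poly q 0 = of_real x"
    using q(1) by (auto simp: poly_over_def poly_0_coeff_0)
  ultimately have "b ^ degree q \<in> K"
    using subfield_minus[OF K \<open>x \<in> K\<close>] by (cases "x \<ge> 0") auto
  moreover have "b ^ p \<in> K"
    using e subfield_minus[OF K \<open>e \<in> K\<close>] by (cases "e \<ge> 0") auto
  moreover have "coprime (degree q) p"
  proof -
    have "\<not> p dvd degree q"
      using p(2,3) by (auto dest: dvd_imp_le)
    then show ?thesis
      using prime_imp_coprime[OF p(1)] coprime_commute by blast
  qed
  moreover have "b \<noteq> 0"
    using e(2) by simp
  ultimately show ?thesis
    by (rule subfield_power_coprime[OF K])
qed

lemma lead_coeff_gcd_poly:
  fixes f g :: "'a::field_gcd poly"
  assumes "f \<noteq> 0"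
  shows "lead_coeff (gcd f g) = 1"
proof -
  have "gcd f g \<noteq> 0"
    using assms by simp
  then have "unit_factor (lead_coeff (gcd f g)) = lead_coeff (gcd f g)"
    by (intro is_unit_unit_factor) (simp add: dvd_field_iff)
  moreover have "unit_factor (gcd f g) = 1"
    using assms by (simp add: unit_factor_gcd)
  ultimately show ?thesis
    by (simp add: unit_factor_poly_def one_pCons)
qed

lemma Rats_of_binomial_dvd_rat_poly:
  fixes G :: "'a::field_char_0 poly"
  assumes "poly_over \<rat> G" "G \<noteq> 0" "degree G \<le> n" "n > 0" "monom 1 n - [:c:] dvd G"
  shows "c \<in> \<rat>"
proof -
  define l where "l = lead_coeff G"
  have "n \<le> degree G"
    using dvd_imp_degree_le[OF assms(5,2)] degree_binomial[OF assms(4), of c] by simp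
  then have "G = smult (l / lead_coeff (monom 1 n - [:c:])) (monom 1 n - [:c:])"
    using dvd_degree_eq_smult[OF assms(5,2)] assms(3) degree_binomial[OF assms(4), of c]
    by (simp add: l_def)
  then have "G = smult l (monom 1 n - [:c:])"
    by (simp only: lead_coeff_binomial[OF assms(4)] div_by_1)
  then have "coeff G 0 = - l * c"
    using assms(4) by simp
  moreover have "l \<in> \<rat>" "l \<noteq> 0" "coeff G 0 \<in> \<rat>"
    using assms(1,2) by (simp_all add: l_def poly_over_def)
  ultimately have "c = - coeff G 0 / l"
    by (simp add: field_simps)
  with \<open>l \<in> \<rat>\<close> \<open>coeff G 0 \<in> \<rat>\<close> show ?thesis
    by simp
qed

lemma coprime_rat_poly_binomial:
  fixes K :: "real set" and G :: "complex poly"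
  assumes K: "is_subfield K" and G: "poly_over \<rat> G" "G \<noteq> 0" "degree G \<le> p"
    and p: "prime p" and e: "e \<in> K" "e \<notin> \<rat>" and b: "b > 0" "\<bar>e\<bar> = b ^ p" "b \<notin> K"
  shows "coprime G (monom 1 p - [:of_real e:])"
proof -
  let ?K = "of_real ` K :: complex set" and ?f = "monom 1 p - [:of_real e:] :: complex poly"
  define q where "q = gcd G ?f"
  have KC: "is_subfield ?K"
    using K by (rule is_subfield_of_real_image)
  have "poly_over ?K G"
    using G(1) Rats_subset_subfield[OF KC] by (rule poly_over_mono[rotated])
  moreover have "poly_over ?K ?f"
    using e(1) KC by (intro poly_over_diff poly_over_monom poly_over_const subfield_1) auto
  ultimately have q_over: "poly_over ?K q"
    unfolding q_def by (rule poly_over_gcd[OF KC])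
  have q_monic: "lead_coeff q = 1"
    unfolding q_def using G(2) by (rule lead_coeff_gcd_poly)
  have "p > 0"
    using p by (rule prime_gt_0_nat)
  have "q dvd G" "q dvd ?f"
    by (simp_all add: q_def)
  then have "degree q \<le> p"
    using G(2,3) dvd_imp_degree_le[OF \<open>q dvd G\<close>] by simp
  then consider "degree q = 0" | "0 < degree q" "degree q < p" | "degree q = p"
    by linarith
  then show ?thesis
  proof cases
    case 1
    moreover have "q \<noteq> 0"
      using q_monic by auto
    ultimately have "is_unit q"
      by (simp add: is_unit_iff_degree)
    then show ?thesis
      unfolding q_def by (rule is_unit_gcd[THEN iffD1])
  next
    case 2
    then have "b \<in> K"
      using root_in_subfield_of_binomial_factor[OF K q_over q_monic \<open>q dvd ?f\<close> p _ _ e(1) b(1,2)]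
      by blast
    with b(3) show ?thesis
      by contradiction
  next
    case 3
    then have "q = ?f"
      using degree_binomial[OF \<open>p > 0\<close>, where c = "of_real e :: complex"]
        lead_coeff_binomial[OF \<open>p > 0\<close>, where c = "of_real e :: complex"]
      by (intro monic_dvd_degree_eq[OF \<open>q dvd ?f\<close> q_monic]) simp_all
    with \<open>q dvd G\<close> have "of_real e \<in> (\<rat> :: complex set)"
      by (intro Rats_of_binomial_dvd_rat_poly[OF G \<open>p > 0\<close>]) simp
    with e(2) show ?thesis
      by simp
  qed
qed

lemma reducible_poly_factor_half_degree:
  fixes F :: "'a::field poly"
  assumes "\<not> irreducible F" "degree F > 0"
  obtains f where "f dvd F" "0 < degree f" "2 * degree f \<le> degree F"
proof -
  have "F \<noteq> 0"
    using assms(2) by auto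
  then have "\<not> is_unit F"
    using assms(2) by (simp add: is_unit_iff_degree)
  then obtain g h where gh: "F = g * h" "\<not> is_unit g" "\<not> is_unit h"
    using assms(1) \<open>F \<noteq> 0\<close> by (auto simp: irreducible_def)
  then have "g \<noteq> 0" "h \<noteq> 0"
    using \<open>F \<noteq> 0\<close> by auto
  then have deg: "0 < degree g" "0 < degree h" "degree F = degree g + degree h"
    using gh by (auto simp: is_unit_iff_degree degree_mult_eq)
  show ?thesis
  proof (cases "degree g \<le> degree h")
    case True
    then show ?thesis using that[of g] gh(1) deg by auto
  next
    case False
    then show ?thesis using that[of h] gh(1) deg by auto
  qed
qed

lemma map_poly_of_rat_mult:
  "map_poly (of_rat :: rat \<Rightarrow> 'a::field_char_0) (f * g) = map_poly of_rat f * map_poly of_rat g"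
  by (simp add: poly_eq_iff coeff_map_poly coeff_mult of_rat_sum of_rat_mult)

lemma irreducible_of_binomial_product:
  fixes F :: "rat poly" and K :: "real set"
  assumes K: "is_subfield K" and p: "prime p"
    and F: "map_poly of_rat F = (monom 1 p - [:of_real e:]) * (monom 1 p - [:of_real e':] :: complex poly)"
    and e: "e \<in> K" "e \<notin> \<rat>" "b > 0" "\<bar>e\<bar> = b ^ p" "b \<notin> K"
    and e': "e' \<in> K" "e' \<notin> \<rat>" "b' > 0" "\<bar>e'\<bar> = b' ^ p" "b' \<notin> K"
  shows "irreducible F"
proof (rule ccontr)
  assume "\<not> irreducible F"
  let ?f1 = "monom 1 p - [:of_real e:] :: complex poly" and ?f2 = "monom 1 p - [:of_real e':] :: complex poly"
  have p0: "p > 0" using p by (rule prime_gt_0_nat)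
  have "degree ?f1 = p" "degree ?f2 = p"
    using degree_binomial[OF p0] by blast+
  then have "?f1 \<noteq> 0" "?f2 \<noteq> 0"
    using p0 by auto
  then have "degree (map_poly (of_rat :: rat \<Rightarrow> complex) F) = 2 * p"
    unfolding F using \<open>degree ?f1 = p\<close> \<open>degree ?f2 = p\<close> by (simp add: degree_mult_eq)
  then have "degree F = 2 * p"
    by (simp add: degree_map_poly)
  then obtain f where f: "f dvd F" "0 < degree f" "degree f \<le> p"
    using reducible_poly_factor_half_degree[OF \<open>\<not> irreducible F\<close>] p0 by auto
  define G where "G = map_poly (of_rat :: rat \<Rightarrow> complex) f"
  have G: "poly_over \<rat> G" "degree G = degree f"
    by (simp_all add: G_def poly_over_def coeff_map_poly degree_map_poly)
  then have "G \<noteq> 0" using f(2) by auto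
  have "coprime G ?f1" "coprime G ?f2"
    using coprime_rat_poly_binomial[OF K G(1) \<open>G \<noteq> 0\<close> _ p] G(2) f(3) e e' by simp_all
  moreover have "G dvd ?f1 * ?f2"
    using f(1) unfolding G_def F[symmetric] by (metis dvdE dvdI map_poly_of_rat_mult)
  ultimately have "is_unit G"
    by (metis coprime_absorb_left coprime_mult_right_iff)
  then show False
    using G(2) f(2) by (simp add: is_unit_iff_degree \<open>G \<noteq> 0\<close>)
qed

section \<open>Quadratic fields\<close>

(* The Q-span of 1 and s; it is the field Q(s) when s^2 is rational and s is not. *)
definition rat_adjoin :: "'a::field_char_0 \<Rightarrow> 'a set" where
  "rat_adjoin s = {of_rat u + of_rat v * s |u v. True}"

lemma rat_adjoinI: "of_rat u + of_rat v * s \<in> rat_adjoin s"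
  unfolding rat_adjoin_def by blast

lemma rat_adjoin_coords_unique:
  fixes s :: "'a::field_char_0"
  assumes "s \<notin> \<rat>" and "of_rat u + of_rat v * s = of_rat u' + of_rat v' * s"
  shows "u = u'" "v = v'"
proof -
  show "v = v'"
  proof (rule ccontr)
    assume "v \<noteq> v'"
    with assms(2) have "s = of_rat ((u - u') / (v' - v))"
      by (simp add: of_rat_divide of_rat_diff field_simps)
    with assms(1) show False by simp
  qed
  with assms(2) show "u = u'" by simp
qed

lemma rat_adjoin_mult:
  fixes s :: "'a::field_char_0"
  assumes "s * s = of_rat d"
  shows "(of_rat u + of_rat v * s) * (of_rat u' + of_rat v' * s) =
    of_rat (u * u' + v * v' * d) + of_rat (u * v' + v * u') * s"
  by (simp add: of_rat_add of_rat_mult algebra_simps flip: assms)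

lemma rat_adjoin_inverse:
  fixes s :: "'a::field_char_0"
  assumes "s * s = of_rat d" "s \<notin> \<rat>"
  shows "inverse (of_rat u + of_rat v * s) \<in> rat_adjoin s"
proof (cases "v = 0")
  case True
  then show ?thesis
    using rat_adjoinI[of "inverse u" 0 s] by (simp add: of_rat_inverse)
next
  case False
  define N where "N = u * u - v * v * d"
  have "N \<noteq> 0"
  proof
    assume "N = 0"
    with \<open>v \<noteq> 0\<close> have "(s - of_rat (u / v)) * (s + of_rat (u / v)) = 0"
      by (simp add: N_def algebra_simps field_simps assms(1) flip: of_rat_mult)
    then have "s \<in> \<rat>"
      by (metis Rats_minus_iff Rats_of_rat eq_neg_iff_add_eq_0 mult_eq_0_iff right_minus_eq)
    with assms(2) show False ..
  qed
  have "u * (u / N) + v * (- v / N) * d = (u * u - v * v * d) / N"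
    by (simp add: diff_divide_distrib)
  also have "\<dots> = 1"
    using \<open>N \<noteq> 0\<close> by (simp add: N_def[symmetric])
  finally have "u * (u / N) + v * (- v / N) * d = 1" .
  moreover have "u * (- v / N) + v * (u / N) = 0"
    by (simp add: field_simps)
  ultimately have "(of_rat u + of_rat v * s) * (of_rat (u / N) + of_rat (- v / N) * s) = 1"
    unfolding rat_adjoin_mult[OF assms(1)] by simp
  then have "inverse (of_rat u + of_rat v * s) = of_rat (u / N) + of_rat (- v / N) * s"
    by (rule inverse_unique)
  then show ?thesis
    by (simp add: rat_adjoinI)
qed

lemma is_subfield_rat_adjoin:
  fixes s :: "'a::field_char_0"
  assumes "s\<^sup>2 \<in> \<rat>" "s \<notin> \<rat>"
  shows "is_subfield (rat_adjoin s)"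
  unfolding is_subfield_def
proof (intro conjI ballI)
  obtain d where d: "s * s = of_rat d"
    using assms(1) by (metis Rats_cases power2_eq_square)
  show "1 \<in> rat_adjoin s"
    using rat_adjoinI[of 1 0 s] by simp
  fix x y assume "x \<in> rat_adjoin s" "y \<in> rat_adjoin s"
  then obtain u v u' v' where xy: "x = of_rat u + of_rat v * s" "y = of_rat u' + of_rat v' * s"
    unfolding rat_adjoin_def by blast
  then have "x - y = of_rat (u - u') + of_rat (v - v') * s"
    by (simp add: of_rat_diff algebra_simps)
  then show "x - y \<in> rat_adjoin s"
    by (simp add: rat_adjoinI)
  show "x * y \<in> rat_adjoin s"
    unfolding xy rat_adjoin_mult[OF d] by (rule rat_adjoinI)
  show "inverse x \<in> rat_adjoin s"
    unfolding xy by (rule rat_adjoin_inverse[OF d assms(2)])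
qed

lemma rat_adjoin_conj_power:
  fixes s :: "'a::field_char_0"
  assumes "s\<^sup>2 \<in> \<rat>"
  shows "\<exists>X Y. (of_rat u + of_rat v * s) ^ n = of_rat X + of_rat Y * s \<and>
                (of_rat u - of_rat v * s) ^ n = of_rat X - of_rat Y * s"
proof (induction n)
  case 0
  then show ?case by (intro exI[of _ 1] exI[of _ 0]) simp
next
  case (Suc n)
  obtain d where d: "s * s = of_rat d"
    using assms by (metis Rats_cases power2_eq_square)
  from Suc obtain X Y where
    IH: "(of_rat u + of_rat v * s) ^ n = of_rat X + of_rat Y * s"
        "(of_rat u - of_rat v * s) ^ n = of_rat X - of_rat Y * s" by blast
  have "(of_rat u + of_rat v * s) * (of_rat X + of_rat Y * s) =
      of_rat (u * X + v * Y * d) + of_rat (u * Y + v * X) * s"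
    "(of_rat u - of_rat v * s) * (of_rat X - of_rat Y * s) =
      of_rat (u * X + v * Y * d) - of_rat (u * Y + v * X) * s"
    by (simp_all add: of_rat_add of_rat_mult algebra_simps flip: d)
  then show ?case
    unfolding power_Suc IH by blast
qed

lemma rat_adjoin_conj_power_eq:
  fixes s :: "'a::field_char_0"
  assumes "s\<^sup>2 \<in> \<rat>" "s \<notin> \<rat>"
    and "(of_rat u + of_rat v * s) ^ n = of_rat x + of_rat y * s"
  shows "(of_rat u - of_rat v * s) ^ n = of_rat x - of_rat y * s"
proof -
  obtain X Y where "(of_rat u + of_rat v * s) ^ n = of_rat X + of_rat Y * s"
      "(of_rat u - of_rat v * s) ^ n = of_rat X - of_rat Y * s"
    using rat_adjoin_conj_power[OF assms(1)] by blast
  with assms show ?thesis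
    using rat_adjoin_coords_unique[OF assms(2)] by metis
qed

section \<open>Integrality and the negative Pell equation\<close>

lemma Ints_of_square_mult_squarefree:
  fixes D :: int and w :: rat
  assumes "squarefree D" and "w\<^sup>2 * of_int D \<in> \<int>"
  shows "w \<in> \<int>"
proof -
  obtain m n where mn: "quotient_of w = (m, n)" by fastforce
  have w: "w = of_int m / of_int n" and "n > 0" and "coprime m n"
    using quotient_of_div[OF mn] quotient_of_denom_pos[OF mn] quotient_of_coprime[OF mn] by auto
  obtain N where "w\<^sup>2 * of_int D = of_int N"
    using assms(2) by (elim Ints_cases)
  with \<open>n > 0\<close> have "of_int (m\<^sup>2 * D) = (of_int (N * n\<^sup>2) :: rat)"
    unfolding w by (simp add: field_simps power2_eq_square)
  then have "n\<^sup>2 dvd m\<^sup>2 * D"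
    by (simp only: of_int_eq_iff) simp
  moreover have "coprime (n\<^sup>2) (m\<^sup>2)"
    using \<open>coprime m n\<close> by (simp add: coprime_commute)
  ultimately have "n\<^sup>2 dvd D"
    by (simp add: coprime_dvd_mult_right_iff)
  with assms(1) \<open>n > 0\<close> have "n = 1"
    by (auto simp: squarefree_def)
  then show ?thesis
    unfolding w by simp
qed

lemma sqrt_squarefree_not_Rats:
  fixes D :: int
  assumes "squarefree D" and "D > 1"
  shows "sqrt (of_int D) \<notin> \<rat>"
proof
  assume "sqrt (of_int D) \<in> \<rat>"
  then obtain r where r: "sqrt (of_int D) = of_rat r"
    by (elim Rats_cases)
  with \<open>D > 1\<close> have "of_rat (r\<^sup>2) = (of_rat (of_int D) :: real)"
    by (simp flip: r add: of_rat_power)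
  then have "r\<^sup>2 = of_int D"
    by (simp only: of_rat_eq_iff)
  then have "r \<in> \<int>"
    using Ints_of_square_mult_squarefree[of 1 r] by simp
  then obtain z where "r = of_int z"
    by (elim Ints_cases)
  with \<open>r\<^sup>2 = of_int D\<close> have "z\<^sup>2 = D"
    by (metis of_int_eq_iff of_int_power)
  with assms(1) have "is_unit z"
    by (auto simp: squarefree_def)
  then have "z\<^sup>2 = 1"
    using power2_abs[of z] by (simp add: zdvd1_eq)
  with \<open>z\<^sup>2 = D\<close> \<open>D > 1\<close> show False
    by simp
qed

fun scaled_power_sum :: "int \<Rightarrow> int \<Rightarrow> nat \<Rightarrow> int" where
  "scaled_power_sum m d 0 = 2"
| "scaled_power_sum m d (Suc 0) = m"
| "scaled_power_sum m d (Suc (Suc n)) =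
     m * scaled_power_sum m d (Suc n) + d\<^sup>2 * scaled_power_sum m d n"

lemma scaled_power_sum_eq:
  fixes a a' :: "'a::comm_ring_1"
  assumes "a * a' = -1" and "of_int d * (a + a') = of_int m"
  shows "of_int (scaled_power_sum m d n) = of_int d ^ n * (a ^ n + a' ^ n)"
proof (induction n rule: induct_nat_012)
  case (ge2 n)
  have "a ^ Suc (Suc n) + a' ^ Suc (Suc n) =
      (a + a') * (a ^ Suc n + a' ^ Suc n) - a * a' * (a ^ n + a' ^ n)"
    by (simp add: algebra_simps)
  then have rec: "a ^ Suc (Suc n) + a' ^ Suc (Suc n) = (a + a') * (a ^ Suc n + a' ^ Suc n) + (a ^ n + a' ^ n)"
    using assms(1) by simp
  have ring: "of_int d ^ Suc (Suc n) * ((a + a') * X + Y) =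
      of_int d * (a + a') * (of_int d ^ Suc n * X) + of_int d ^ 2 * (of_int d ^ n * Y)" for X Y :: 'a
    by (simp add: algebra_simps power2_eq_square)
  show ?case
    unfolding rec ring using ge2 assms(2) by simp
qed (use assms in simp_all)

lemma scaled_power_sum_cong: "d dvd scaled_power_sum m d (Suc n) - m ^ Suc n"
proof (induction n rule: induct_nat_012)
  case 1
  have "scaled_power_sum m d 2 - m\<^sup>2 = d * (2 * d)"
    by (simp add: numeral_2_eq_2 power2_eq_square)
  then show ?case by (simp add: numeral_2_eq_2)
next
  case (ge2 n)
  have "scaled_power_sum m d (Suc (Suc (Suc n))) - m ^ Suc (Suc (Suc n)) =
      m * (scaled_power_sum m d (Suc (Suc n)) - m ^ Suc (Suc n)) + d * (d * scaled_power_sum m d (Suc n))"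
    by (simp add: algebra_simps power2_eq_square)
  then show ?case
    using ge2 by simp
qed simp

lemma Ints_of_power_sum_Ints:
  fixes a a' :: "'a::field_char_0"
  assumes "a * a' = -1" and "a + a' = of_rat t" and "a ^ p + a' ^ p \<in> \<int>" and "p > 0"
  shows "t \<in> \<int>"
proof -
  obtain m d where md: "quotient_of t = (m, d)" by fastforce
  have t: "t = of_int m / of_int d" and "d > 0" and "coprime m d"
    using quotient_of_div[OF md] quotient_of_denom_pos[OF md] quotient_of_coprime[OF md] by auto
  obtain k where k: "a ^ p + a' ^ p = of_int k"
    using assms(3) by (elim Ints_cases)
  have "of_int d * (a + a') = of_int m"
    using assms(2) \<open>d > 0\<close> by (simp add: t of_rat_divide)
  then have "(of_int (scaled_power_sum m d p) :: 'a) = of_int (d ^ p * k)"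
    using scaled_power_sum_eq[OF assms(1)] k by simp
  then have "d dvd scaled_power_sum m d p"
    using \<open>p > 0\<close> by (simp only: of_int_eq_iff) simp
  moreover have "d dvd scaled_power_sum m d p - m ^ p"
    using scaled_power_sum_cong[of d m "p - 1"] \<open>p > 0\<close> by simp
  ultimately have "d dvd scaled_power_sum m d p - (scaled_power_sum m d p - m ^ p)"
    by (rule dvd_diff)
  then have "d dvd m ^ p"
    by simp
  moreover have "coprime d (m ^ p)"
    using \<open>coprime m d\<close> by (simp add: coprime_commute)
  ultimately have "is_unit d"
    using coprime_common_divisor[of d "m ^ p" d] by simp
  then have "d = 1"
    using \<open>d > 0\<close> by simp
  then show ?thesis
    by (simp add: t)
qed

lemma gcd_two_disc:
  fixes k :: int
  assumes "k \<ge> 1" and "\<not> 4 dvd k"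
  defines "g \<equiv> gcd 2 k"
  shows "g\<^sup>2 * ((k\<^sup>2 + 4) div g\<^sup>2) = k\<^sup>2 + 4" and "(k\<^sup>2 + 4) div g\<^sup>2 > 1"
proof -
  have "g\<^sup>2 dvd k\<^sup>2 + 4 \<and> (k\<^sup>2 + 4) div g\<^sup>2 > 1"
  proof (cases "even k")
    case True
    then obtain m where m: "k = 2 * m" ..
    with assms(2) have "odd m" by auto
    then have "m \<noteq> 0" by auto
    have "g = 2" unfolding g_def m by (simp add: gcd_mult_left)
    moreover have "k\<^sup>2 + 4 = 4 * (m\<^sup>2 + 1)" unfolding m by (simp add: power_mult_distrib)
    ultimately show ?thesis using \<open>m \<noteq> 0\<close> by simp
  next
    case False
    then have "g = 1" unfolding g_def by (simp add: coprime_imp_gcd_eq_1)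
    then show ?thesis by (simp add: add_pos_nonneg)
  qed
  then show "g\<^sup>2 * ((k\<^sup>2 + 4) div g\<^sup>2) = k\<^sup>2 + 4" "(k\<^sup>2 + 4) div g\<^sup>2 > 1"
    by simp_all
qed

lemma sq_add_4_eq_imp_even:
  fixes t B m :: int
  assumes "odd m" and eq: "t\<^sup>2 + 4 = B\<^sup>2 * (m\<^sup>2 + 1)"
  shows "even B"
proof (rule ccontr)
  assume "odd B"
  obtain i j where "m = 2 * i + 1" "B = 2 * j + 1"
    using \<open>odd m\<close> \<open>odd B\<close> by (meson oddE)
  then have t2: "t\<^sup>2 + 4 = 2 * ((2 * j + 1)\<^sup>2 * (2 * i\<^sup>2 + 2 * i + 1))"
    using eq by (simp add: power2_eq_square algebra_simps)
  then have "even (t\<^sup>2 + 4)"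
    by simp
  then obtain t' where "t = 2 * t'"
    by auto
  with t2 have "2 * (t'\<^sup>2 + 1) = (2 * j + 1)\<^sup>2 * (2 * i\<^sup>2 + 2 * i + 1)"
    by (simp add: power2_eq_square algebra_simps)
  then have "even ((2 * j + 1)\<^sup>2 * (2 * i\<^sup>2 + 2 * i + 1))"
    by (metis dvd_triv_left)
  then show False
    by (simp add: even_add even_mult_iff)
qed

lemma neg_pell_solution_ge:
  fixes k t B :: int
  assumes k: "k \<ge> 1" "\<not> 4 dvd k" and "t \<ge> 1"
    and eq: "t\<^sup>2 + 4 = B\<^sup>2 * ((k\<^sup>2 + 4) div (gcd 2 k)\<^sup>2)"
  shows "k \<le> t"
proof -
  have "t\<^sup>2 + 4 \<noteq> 0"
    by (smt (verit) zero_le_power2)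
  with eq have "B \<noteq> 0"
    by auto
  have "k\<^sup>2 \<le> t\<^sup>2"
  proof (cases "even k")
    case False
    then have "t\<^sup>2 + 4 = B\<^sup>2 * (k\<^sup>2 + 4)"
      using eq by (simp add: coprime_imp_gcd_eq_1)
    moreover have "(k\<^sup>2 + 4) * 1 \<le> (k\<^sup>2 + 4) * B\<^sup>2"
      using \<open>B \<noteq> 0\<close> by (intro mult_left_mono) (simp_all add: int_one_le_iff_zero_less)
    ultimately show ?thesis
      by (simp add: algebra_simps)
  next
    case True
    then obtain m where m: "k = 2 * m" ..
    with k(2) have "odd m"
      by auto
    have D: "(k\<^sup>2 + 4) div (gcd 2 k)\<^sup>2 = m\<^sup>2 + 1"
      unfolding m by (simp add: gcd_mult_left power_mult_distrib)
    then have "even B"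
      using sq_add_4_eq_imp_even[OF \<open>odd m\<close>] eq by simp
    then obtain c where "B = 2 * c" ..
    then have "t\<^sup>2 + 4 = 4 * c\<^sup>2 * (m\<^sup>2 + 1)"
      using eq D by (simp add: power_mult_distrib)
    moreover have "4 * (m\<^sup>2 + 1) * 1 \<le> 4 * (m\<^sup>2 + 1) * c\<^sup>2"
      using \<open>B \<noteq> 0\<close> \<open>B = 2 * c\<close> by (intro mult_left_mono) (simp_all add: int_one_le_iff_zero_less)
    ultimately show ?thesis
      unfolding m by (simp add: power_mult_distrib algebra_simps)
  qed
  then show ?thesis
    by (rule power2_le_imp_le) (use \<open>t \<ge> 1\<close> in simp)
qed

lemma sqrt_k2_plus_4_not_Rats:
  fixes k :: int
  assumes "k \<ge> 1" "\<not> 4 dvd k" "squarefree ((k\<^sup>2 + 4) div (gcd 2 k)\<^sup>2)"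
  shows "sqrt (of_int (k\<^sup>2 + 4)) \<notin> \<rat>"
proof
  define g where "g = gcd 2 k"
  define D where "D = (k\<^sup>2 + 4) div g\<^sup>2"
  have "g\<^sup>2 * D = k\<^sup>2 + 4" "D > 1" "g > 0"
    using gcd_two_disc[OF assms(1,2)] assms(1) by (auto simp: g_def D_def)
  then have "sqrt (of_int D) = sqrt (of_int (k\<^sup>2 + 4)) / of_int g"
    by (simp flip: \<open>g\<^sup>2 * D = k\<^sup>2 + 4\<close> add: real_sqrt_mult)
  moreover assume "sqrt (of_int (k\<^sup>2 + 4)) \<in> \<rat>"
  ultimately have "sqrt (of_int D) \<in> \<rat>"
    by simp
  with sqrt_squarefree_not_Rats show False
    using assms(3) \<open>D > 1\<close> by (simp add: D_def g_def)
qed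

lemma rat_neg_pell_solution_ge:
  fixes k t :: int and w :: rat
  assumes "k \<ge> 1" "\<not> 4 dvd k" "squarefree ((k\<^sup>2 + 4) div (gcd 2 k)\<^sup>2)" "t \<ge> 1"
    and "w\<^sup>2 * of_int (k\<^sup>2 + 4) = of_int (t\<^sup>2 + 4)"
  shows "k \<le> t"
proof -
  define g where "g = gcd 2 k"
  define D where "D = (k\<^sup>2 + 4) div g\<^sup>2"
  have "g\<^sup>2 * D = k\<^sup>2 + 4"
    using gcd_two_disc[OF assms(1,2)] by (simp add: g_def D_def)
  have "(w * of_int g)\<^sup>2 * of_int D = w\<^sup>2 * of_int (g\<^sup>2 * D)"
    by (simp add: power_mult_distrib)
  also have "\<dots> = of_int (t\<^sup>2 + 4)"
    using \<open>g\<^sup>2 * D = k\<^sup>2 + 4\<close> assms(5) by simp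
  finally have wg: "(w * of_int g)\<^sup>2 * of_int D = of_int (t\<^sup>2 + 4)" .
  have "squarefree D"
    using assms(3) by (simp add: D_def g_def)
  then have "w * of_int g \<in> \<int>"
    using Ints_of_square_mult_squarefree[of D "w * of_int g"] wg by simp
  then obtain B where "w * of_int g = of_int B"
    by (elim Ints_cases)
  with wg have "t\<^sup>2 + 4 = B\<^sup>2 * D"
    by (metis of_int_eq_iff of_int_mult of_int_power)
  then show ?thesis
    using neg_pell_solution_ge assms(1,2,4) by (simp add: D_def g_def)
qed

section \<open>The unit eps k and its p-th roots\<close>

definition eps :: "int \<Rightarrow> real" where
  "eps k = (of_int k + sqrt (of_int (k\<^sup>2 + 4))) / 2"

lemma sqrt_k2_plus_4_sq: "(sqrt (of_int (k\<^sup>2 + 4)))\<^sup>2 = (of_int k)\<^sup>2 + (4::real)"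
  by (simp add: add_nonneg_nonneg)

lemma eps_pos: "eps k > 0"
proof -
  have "sqrt ((of_int k)\<^sup>2) < sqrt (of_int (k\<^sup>2 + 4) :: real)"
    by (rule real_sqrt_less_mono) simp
  then have "\<bar>of_int k\<bar> < sqrt (of_int (k\<^sup>2 + 4) :: real)"
    by (simp only: real_sqrt_abs)
  then show ?thesis
    by (auto simp: eps_def abs_less_iff)
qed

lemma eps_conj: "of_int k - eps k = - 1 / eps k"
proof -
  have "eps k * (of_int k - eps k) = -1"
    using sqrt_k2_plus_4_sq[of k] by (simp add: eps_def field_simps power2_eq_square)
  with eps_pos[of k] show ?thesis
    by (simp add: field_simps)
qed

lemma eps_gt_1:
  assumes "k \<ge> 1"
  shows "eps k > 1"
proof -
  have "(2::real)\<^sup>2 < (sqrt (of_int (k\<^sup>2 + 4)))\<^sup>2"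
    using assms sqrt_k2_plus_4_sq[of k] by simp
  then have "2 < sqrt (of_int (k\<^sup>2 + 4) :: real)"
    by (rule power_less_imp_less_base) simp
  with assms show ?thesis
    by (simp add: eps_def)
qed

lemma eps_in_rat_adjoin:
  "eps k \<in> rat_adjoin (sqrt (of_int (k\<^sup>2 + 4)))"
  "of_int k - eps k \<in> rat_adjoin (sqrt (of_int (k\<^sup>2 + 4)))"
  using rat_adjoinI[of "of_int k / 2" "1 / 2" "sqrt (of_int (k\<^sup>2 + 4))"]
    rat_adjoinI[of "of_int k / 2" "- 1 / 2" "sqrt (of_int (k\<^sup>2 + 4))"]
  by (simp_all add: eps_def of_rat_divide of_rat_minus field_simps)

lemma eps_not_Rats:
  assumes "sqrt (of_int (k\<^sup>2 + 4)) \<notin> \<rat>"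
  shows "eps k \<notin> \<rat>" "of_int k - eps k \<notin> \<rat>"
proof -
  have "sqrt (of_int (k\<^sup>2 + 4)) = 2 * eps k - of_int k"
    "sqrt (of_int (k\<^sup>2 + 4)) = of_int k - 2 * (of_int k - eps k)"
    by (simp_all add: eps_def)
  with assms show "eps k \<notin> \<rat>" "of_int k - eps k \<notin> \<rat>"
    by (metis Rats_diff Rats_mult Rats_number_of Rats_of_int)+
qed

lemma real_power_eq_minus_one:
  fixes x :: real
  assumes "x ^ n = -1"
  shows "x = -1"
proof -
  have "n > 0"
    using assms by (cases n) auto
  have "\<bar>x\<bar> ^ n = 1 ^ n"
    using arg_cong[OF assms, of abs] by (simp add: power_abs)
  then have "\<bar>x\<bar> = 1"
    by (rule power_eq_imp_eq_base) (use \<open>n > 0\<close> in simp_all)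
  with assms show ?thesis
    by (cases "x \<ge> 0") auto
qed

lemma conj_of_root_eps:
  fixes k :: int and a :: real
  defines "s \<equiv> sqrt (of_int (k\<^sup>2 + 4))"
  assumes "s \<notin> \<rat>" "a = of_rat u + of_rat v * s" "a ^ p = eps k"
  shows "(of_rat u - of_rat v * s) ^ p = of_int k - eps k"
    and "a * (of_rat u - of_rat v * s) = -1"
proof -
  have "s\<^sup>2 \<in> \<rat>"
    unfolding s_def by (simp add: add_nonneg_nonneg)
  have "(of_rat u + of_rat v * s) ^ p = of_rat (of_int k / 2) + of_rat (1 / 2) * s"
    using assms(3,4) by (simp add: s_def eps_def of_rat_divide add_divide_distrib)
  then have "(of_rat u - of_rat v * s) ^ p = of_rat (of_int k / 2) - of_rat (1 / 2) * s"
    by (rule rat_adjoin_conj_power_eq[OF \<open>s\<^sup>2 \<in> \<rat>\<close> assms(2)])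
  then show conj: "(of_rat u - of_rat v * s) ^ p = of_int k - eps k"
    by (simp add: s_def eps_def of_rat_divide field_simps)
  have "(a * (of_rat u - of_rat v * s)) ^ p = -1"
    using assms(4) conj eps_conj[of k] eps_pos[of k] by (simp add: power_mult_distrib)
  then show "a * (of_rat u - of_rat v * s) = -1"
    by (rule real_power_eq_minus_one)
qed

lemma rat_adjoin_root_neg_pell:
  fixes k :: int and a :: real
  defines "s \<equiv> sqrt (of_int (k\<^sup>2 + 4))"
  assumes "s \<notin> \<rat>" "p > 0" "a \<in> rat_adjoin s" "a ^ p = eps k"
  obtains t :: int and w :: rat
  where "a - 1 / a = of_int t" "w\<^sup>2 * of_int (k\<^sup>2 + 4) = of_int (t\<^sup>2 + 4)"
proof -
  obtain u v where a: "a = of_rat u + of_rat v * s"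
    using assms(4) unfolding rat_adjoin_def by blast
  define a' where "a' = of_rat u - of_rat v * s"
  have a'p: "a' ^ p = of_int k - eps k" and aa': "a * a' = -1"
    using conj_of_root_eps[OF assms(2)[unfolded s_def] a[unfolded s_def] assms(5), folded s_def]
    by (simp_all add: a'_def)
  have "a + a' = of_rat (2 * u)"
    unfolding a a'_def by (simp add: of_rat_mult)
  moreover have "a ^ p + a' ^ p \<in> \<int>"
    using assms(5) a'p by simp
  ultimately have "2 * u \<in> \<int>"
    using Ints_of_power_sum_Ints[OF aa'] \<open>p > 0\<close> by blast
  then obtain t where t: "2 * u = of_int t"
    by (elim Ints_cases)
  have "a \<noteq> 0"
    using aa' by auto
  with aa' have "a' = - 1 / a"
    by (simp add: field_simps mult.commute)
  with \<open>a + a' = of_rat (2 * u)\<close> have "a - 1 / a = of_int t"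
    by (simp add: t)
  have "(a - a')\<^sup>2 = of_rat ((2 * v)\<^sup>2 * of_int (k\<^sup>2 + 4))"
    unfolding a a'_def s_def by (simp add: of_rat_mult of_rat_add of_rat_power power_mult_distrib add_nonneg_nonneg)
  moreover have "(a - a')\<^sup>2 = of_rat (of_int (t\<^sup>2 + 4))"
  proof -
    have "(a - a')\<^sup>2 = (a + a')\<^sup>2 - 4 * (a * a')"
      by (simp add: power2_eq_square algebra_simps)
    then show ?thesis
      using aa' \<open>a + a' = of_rat (2 * u)\<close> by (simp add: t of_rat_add of_rat_power)
  qed
  ultimately have "(2 * v)\<^sup>2 * of_int (k\<^sup>2 + 4) = of_int (t\<^sup>2 + 4)"
    by (simp only: of_rat_eq_iff)
  with \<open>a - 1 / a = of_int t\<close> show ?thesis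
    using that by blast
qed

lemma minus_inverse_le_imp_le:
  fixes x y :: real
  assumes "0 < x" "0 < y" "x - 1 / x \<le> y - 1 / y"
  shows "x \<le> y"
proof (rule ccontr)
  assume "\<not> x \<le> y"
  then have "1 / x < 1 / y"
    using assms(2) by (simp add: frac_less2)
  with \<open>\<not> x \<le> y\<close> assms(3) show False
    by linarith
qed

lemma root_of_eps_not_in_rat_adjoin:
  fixes k :: int and a :: real
  assumes k: "k \<ge> 1" "\<not> 4 dvd k" "squarefree ((k\<^sup>2 + 4) div (gcd 2 k)\<^sup>2)"
    and "p > 1" "a > 0" "a ^ p = eps k"
  shows "a \<notin> rat_adjoin (sqrt (of_int (k\<^sup>2 + 4)))"
proof
  assume "a \<in> rat_adjoin (sqrt (of_int (k\<^sup>2 + 4)))"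
  moreover have "p > 0"
    using \<open>p > 1\<close> by simp
  ultimately obtain t :: int and w :: rat where t: "a - 1 / a = of_int t"
    and w: "w\<^sup>2 * of_int (k\<^sup>2 + 4) = of_int (t\<^sup>2 + 4)"
    using rat_adjoin_root_neg_pell[OF sqrt_k2_plus_4_not_Rats[OF k]] assms(6) by blast
  have "eps k > 1"
    using k(1) by (rule eps_gt_1)
  have "a > 1"
  proof (rule ccontr)
    assume "\<not> a > 1"
    then have "a ^ p \<le> 1"
      using \<open>a > 0\<close> by (simp add: power_le_one)
    with assms(6) \<open>eps k > 1\<close> show False
      by simp
  qed
  then have "1 / a < 1"
    by simp
  with t \<open>a > 1\<close> have "of_int t > (0::real)"
    by linarith
  then have "k \<le> t"
    using rat_neg_pell_solution_ge[OF k] w by simp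
  moreover have "eps k - 1 / eps k = of_int k"
    using eps_conj[of k] by simp
  ultimately have "eps k \<le> a"
    using minus_inverse_le_imp_le[of "eps k" a] \<open>eps k > 1\<close> \<open>a > 1\<close> t by simp
  have "eps k < eps k ^ p"
    using power_strict_increasing[of 1 p "eps k"] \<open>p > 1\<close> \<open>eps k > 1\<close> by simp
  also have "\<dots> \<le> a ^ p"
    using \<open>eps k \<le> a\<close> \<open>eps k > 1\<close> by (simp add: power_mono)
  finally show False
    using assms(6) by simp
qed

lemma map_F_poly_eq_binomial_product:
  fixes e e' :: real
  assumes "e * e' = -1" "e + e' = of_int k"
  shows "map_poly of_rat (F_poly k p) = (monom 1 p - [:of_real e:]) * (monom 1 p - [:of_real e':] :: complex poly)"
proof -
  have "(monom 1 p - [:of_real e:]) * (monom 1 p - [:of_real e':] :: complex poly) =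
      monom 1 p * monom 1 p - smult (of_real (e + e')) (monom 1 p) + [:of_real (e * e'):]"
    by (simp add: algebra_simps smult_add_left)
  also have "\<dots> = monom 1 (2 * p) - smult (of_int k) (monom 1 p) - 1"
    using assms by (simp add: mult_monom mult_2 one_pCons)
  finally show ?thesis
    by (simp add: poly_eq_iff coeff_map_poly F_poly_def of_rat_diff of_rat_mult coeff_monom)
qed

theorem lemma3p1:
  fixes k :: int and p :: nat
  assumes "k \<ge> 1"
    and "\<not> (4 dvd k)"
    and "squarefree ((k^2 + 4) div (gcd 2 k)^2)"
    and "prime p"
  shows "irreducible (F_poly k p)"
proof -
  let ?K = "rat_adjoin (sqrt (of_int (k\<^sup>2 + 4)))"
  define a where "a = root p (eps k)"
  have irrational: "sqrt (of_int (k\<^sup>2 + 4)) \<notin> \<rat>"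
    using assms(1-3) by (rule sqrt_k2_plus_4_not_Rats)
  then have K: "is_subfield ?K"
    by (intro is_subfield_rat_adjoin) (simp_all add: add_nonneg_nonneg)
  have "p > 1"
    using assms(4) by (rule prime_gt_1_nat)
  then have "a > 0" "a ^ p = eps k"
    using eps_pos[of k] by (simp_all add: a_def)
  then have "a \<notin> ?K"
    using root_of_eps_not_in_rat_adjoin[OF assms(1-3) \<open>p > 1\<close>] by blast
  then have "1 / a \<notin> ?K"
    using subfield_inverse[OF K] by fastforce
  have "eps k * (of_int k - eps k) = -1"
    using eps_pos[of k] by (simp add: eps_conj)
  then have F: "map_poly of_rat (F_poly k p) =
      (monom 1 p - [:of_real (eps k):]) * (monom 1 p - [:of_real (of_int k - eps k):] :: complex poly)"
    by (intro map_F_poly_eq_binomial_product) simp_all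
  have "\<bar>eps k\<bar> = a ^ p" "\<bar>of_int k - eps k\<bar> = (1 / a) ^ p"
    using \<open>a ^ p = eps k\<close> eps_pos[of k] by (simp_all add: eps_conj power_one_over)
  with \<open>a > 0\<close> \<open>a \<notin> ?K\<close> \<open>1 / a \<notin> ?K\<close> show ?thesis
    by (intro irreducible_of_binomial_product[where b = a and b' = "1 / a", OF K assms(4) F
          eps_in_rat_adjoin(1) eps_not_Rats(1)[OF irrational] _ _ _
          eps_in_rat_adjoin(2) eps_not_Rats(2)[OF irrational]])
      simp_all
qed

end
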